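(* Assume there exists a $1$-perfect code in $H(q+1,q)$. Let $f$ be a $(b,c)$-coloring of $H(n,q)$ with main eigenvalue $\lambda$ such that the set of vertices of color $1$ can be partitioned into $k$-faces, and suppose $\lambda\le k(q-1)$. Then for every positive integer $r$ and all $t_1,\dots,t_r\in\{1,\dots,q\}$ there is a $\big(q^r(b+c)-t_1\cdots t_r c,\ t_1\cdots t_r c\big)$-coloring of $H\big(q^r n+(k(q-1)-\lambda)\frac{q^r-1}{q-1},\,q\big)$ with main eigenvalue $\lambda+k(q-1)(q^r-1)$.
   Context: The Hamming graph $H(n,q)$ has vertex set $\mathbb{Z}_q^n$, two vertices adjacent iff they differ in exactly one coordinate. A $k$-face is a set of vertices obtained by fixing $n-k$ coordinates and letting the other $k$ coordinates range over $\mathbb{Z}_q$. A $(b,c)$-coloring of $H(n,q)$ is a surjective map onto $\{1,2\}$ in which each color-1 vertex has exactly $b$ neighbours of color 2 and each color-2 vertex has exactly $c$ neighbours of color 1; its main eigenvalue is $n(q-1)-(b+c)$. A $1$-perfect code in $H(n,q)$ is a set $C$ of vertices such that every radius-$1$ Hamming ball contains exactly one element of $C$. *)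

theory Defs
  imports Main
begin

text \<open>Vertices of H(n,q): words of length n over {0..q-1}, encoded as functions
  nat => nat that vanish outside {0..<n}.\<close>
definition hamming_verts :: "nat \<Rightarrow> nat \<Rightarrow> (nat \<Rightarrow> nat) set" where
  "hamming_verts n q = {x. (\<forall>i<n. x i < q) \<and> (\<forall>i\<ge>n. x i = 0)}"

definition hamming_dist :: "nat \<Rightarrow> (nat \<Rightarrow> nat) \<Rightarrow> (nat \<Rightarrow> nat) \<Rightarrow> nat" where
  "hamming_dist n x y = card {i. i < n \<and> x i \<noteq> y i}"

definition hamming_adj :: "nat \<Rightarrow> (nat \<Rightarrow> nat) \<Rightarrow> (nat \<Rightarrow> nat) \<Rightarrow> bool" where
  "hamming_adj n x y \<longleftrightarrow> hamming_dist n x y = 1"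

definition is_face :: "nat \<Rightarrow> nat \<Rightarrow> nat \<Rightarrow> (nat \<Rightarrow> nat) set \<Rightarrow> bool" where
  "is_face n q k F \<longleftrightarrow> (\<exists>K a. K \<subseteq> {..<n} \<and> card K = k \<and> (\<forall>i\<in>{..<n} - K. a i < q) \<and>
      F = {x \<in> hamming_verts n q. \<forall>i\<in>{..<n} - K. x i = a i})"

definition is_coloring :: "nat \<Rightarrow> nat \<Rightarrow> nat \<Rightarrow> nat \<Rightarrow> ((nat \<Rightarrow> nat) \<Rightarrow> nat) \<Rightarrow> bool" where
  "is_coloring n q b c f \<longleftrightarrow>
     f ` hamming_verts n q = {1, 2} \<and>
     (\<forall>x\<in>hamming_verts n q. f x = 1 \<longrightarrow>
        card {y \<in> hamming_verts n q. hamming_adj n x y \<and> f y = 2} = b) \<and>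
     (\<forall>x\<in>hamming_verts n q. f x = 2 \<longrightarrow>
        card {y \<in> hamming_verts n q. hamming_adj n x y \<and> f y = 1} = c)"

definition main_eigenvalue :: "nat \<Rightarrow> nat \<Rightarrow> nat \<Rightarrow> nat \<Rightarrow> int" where
  "main_eigenvalue n q b c = int n * (int q - 1) - (int b + int c)"

definition perfect_code_1 :: "nat \<Rightarrow> nat \<Rightarrow> (nat \<Rightarrow> nat) set \<Rightarrow> bool" where
  "perfect_code_1 n q C \<longleftrightarrow> C \<subseteq> hamming_verts n q \<and>
     (\<forall>x\<in>hamming_verts n q. card {z \<in> C. hamming_dist n x z \<le> 1} = 1)"

end

theory Submission
  imports Defs "HOL-Number_Theory.Cong"
begin

text \<open>
  A perfect code in \<open>H(q + 1, q)\<close> has minimum distance 3, and every word of length \<open>q - 1\<close> is the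
  prefix of exactly one codeword. Comparing a word \<open>w\<close> of length \<open>q\<close> with the codeword that
  extends its first \<open>q - 1\<close> letters gives a pair \<open>(syndrome w, code_tail w)\<close>, and this map sends
  the neighbourhood of \<open>w\<close> in \<open>H(q, q)\<close> bijectively onto the pairs \<open>(a, s)\<close> with
  \<open>a \<noteq> syndrome w\<close>.

  Cut the first \<open>q n\<close> coordinates of \<open>H(q n + m, q)\<close>, where \<open>m = k (q - 1) - \<lambda>\<close>, into \<open>n\<close>
  blocks of length \<open>q\<close>; the syndromes of the blocks project a vertex \<open>y\<close> to a vertex \<open>x\<close> of
  \<open>H(n, q)\<close>. Give \<open>y\<close> colour 1 iff \<open>x\<close> has colour 1 and the code tails of the blocks outside
  the directions of the face through \<open>x\<close>, plus the \<open>m\<close> remaining coordinates, sum to less than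
  \<open>t\<close> modulo \<open>q\<close>. By the first paragraph the neighbours of \<open>y\<close> obtained by changing block \<open>j\<close>
  correspond to the neighbours of \<open>x\<close> in direction \<open>j\<close>, each with a free new code tail. Counting
  colour-1 neighbours on this basis shows that \<open>y\<close> carries a \<open>(q (b + c) - t c, t c)\<close>-coloring
  of \<open>H(q n + m, q)\<close> whose colour-1 class is partitioned into \<open>q k\<close>-faces and whose main
  eigenvalue \<open>\<lambda>'\<close> again satisfies \<open>q k (q - 1) - \<lambda>' = m\<close>. Iterating \<open>r\<close> times gives the
  theorem.
\<close>

section \<open>Hamming graphs\<close>

lemma finite_hamming_verts: "finite (hamming_verts n q)"
  by (rule finite_subset[OF _ finite_set_of_finite_funs[of "{..<n}" "{..<q}" 0]])
    (auto simp: hamming_verts_def)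

lemma hamming_verts_less: "x \<in> hamming_verts n q \<Longrightarrow> i < n \<Longrightarrow> x i < q"
  by (simp add: hamming_verts_def)

lemma fun_upd_in_hamming_verts:
  "x \<in> hamming_verts n q \<Longrightarrow> i < n \<Longrightarrow> v < q \<Longrightarrow> x(i := v) \<in> hamming_verts n q"
  by (auto simp: hamming_verts_def)

lemma hamming_verts_eqI:
  assumes "x \<in> hamming_verts n q" "y \<in> hamming_verts n q" "\<And>i. i < n \<Longrightarrow> x i = y i"
  shows "x = y"
proof
  fix i show "x i = y i"
    using assms by (cases "i < n") (auto simp: hamming_verts_def)
qed

lemma card_less_neq: "a < q \<Longrightarrow> card {v. v < q \<and> v \<noteq> a} = q - 1"
proof -
  assume "a < q"
  have "{v. v < q \<and> v \<noteq> a} = {..<q} - {a}" by auto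
  with \<open>a < q\<close> show ?thesis by simp
qed

lemma hamming_dist_le_1I: "{i. i < n \<and> x i \<noteq> y i} \<subseteq> {j} \<Longrightarrow> hamming_dist n x y \<le> 1"
  unfolding hamming_dist_def using card_mono[of "{j}"] by fastforce

lemma hamming_dist_le_1_differ:
  assumes "hamming_dist n x y \<le> 1" "i < n" "x i \<noteq> y i"
  shows "{j. j < n \<and> x j \<noteq> y j} \<subseteq> {i}"
proof
  fix j assume j: "j \<in> {j. j < n \<and> x j \<noteq> y j}"
  show "j \<in> {i}"
  proof (rule ccontr)
    assume "j \<notin> {i}"
    with j assms(2,3) have "{i, j} \<subseteq> {i. i < n \<and> x i \<noteq> y i}" by auto
    then have "card {i, j} \<le> hamming_dist n x y"
      unfolding hamming_dist_def by (rule card_mono[rotated]) simp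
    with assms(1) \<open>j \<notin> {i}\<close> show False by simp
  qed
qed

lemma differ_subset_trans:
  assumes "{i. i < n \<and> x i \<noteq> y i} \<subseteq> A" "{i. i < n \<and> y i \<noteq> z i} \<subseteq> B"
  shows "{i. i < n \<and> x i \<noteq> z i} \<subseteq> A \<union> B"
proof
  fix i assume "i \<in> {i. i < n \<and> x i \<noteq> z i}"
  then have "i < n" "x i \<noteq> y i \<or> y i \<noteq> z i" by auto
  with assms show "i \<in> A \<union> B" by blast
qed

lemma hamming_dist_commute: "hamming_dist n x y = hamming_dist n y x"
  unfolding hamming_dist_def by (rule arg_cong[where f = card]) auto

lemma hamming_adj_fun_upd_iff:
  assumes x: "x \<in> hamming_verts n q"
  shows "y \<in> hamming_verts n q \<and> hamming_adj n x y \<longleftrightarrow> (\<exists>i<n. \<exists>v<q. v \<noteq> x i \<and> y = x(i := v))"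
proof
  assume y: "y \<in> hamming_verts n q \<and> hamming_adj n x y"
  then obtain i where i: "{i. i < n \<and> x i \<noteq> y i} = {i}"
    by (auto simp: hamming_adj_def hamming_dist_def card_Suc_eq)
  have "i \<in> {j. j < n \<and> x j \<noteq> y j}" using i by simp
  then have i_lt: "i < n" and ne: "y i \<noteq> x i" by auto
  have agree: "x j = y j" if "j < n" "j \<noteq> i" for j
  proof -
    have "j \<notin> {j. j < n \<and> x j \<noteq> y j}" using i that(2) by simp
    with that(1) show ?thesis by simp
  qed
  have "y = x(i := y i)"
    by (rule hamming_verts_eqI[of _ n q])
      (use x y i_lt agree in \<open>auto intro: fun_upd_in_hamming_verts hamming_verts_less\<close>)
  moreover have "y i < q"
    using y i_lt by (auto intro: hamming_verts_less)
  ultimately show "\<exists>i<n. \<exists>v<q. v \<noteq> x i \<and> y = x(i := v)"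
    using i_lt ne by blast
next
  assume "\<exists>i<n. \<exists>v<q. v \<noteq> x i \<and> y = x(i := v)"
  then obtain i v where iv: "i < n" "v < q" "v \<noteq> x i" "y = x(i := v)" by blast
  then have "{j. j < n \<and> x j \<noteq> y j} = {i}" by auto
  with iv x show "y \<in> hamming_verts n q \<and> hamming_adj n x y"
    by (simp add: hamming_adj_def hamming_dist_def fun_upd_in_hamming_verts)
qed

lemma fun_upd_eq_fun_upd_neq:
  assumes "v \<noteq> x i" "x(i := v) = x(j := w)"
  shows "i = j \<and> v = w"
  by (metis assms fun_upd_apply)

lemma card_hamming_neighbours_filter:
  assumes x: "x \<in> hamming_verts n q"
  shows "card {y \<in> hamming_verts n q. hamming_adj n x y \<and> P y} =
         (\<Sum>i<n. card {v. v < q \<and> v \<noteq> x i \<and> P (x(i := v))})"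
proof -
  let ?S = "SIGMA i:{..<n}. {v. v < q \<and> v \<noteq> x i \<and> P (x(i := v))}"
  have "{y \<in> hamming_verts n q. hamming_adj n x y \<and> P y} = (\<lambda>(i, v). x(i := v)) ` ?S"
  proof (rule set_eqI, rule iffI)
    fix y assume "y \<in> {y \<in> hamming_verts n q. hamming_adj n x y \<and> P y}"
    then obtain i v where "i < n" "v < q" "v \<noteq> x i" "y = x(i := v)" "P y"
      using hamming_adj_fun_upd_iff[OF x, of y] by auto
    then show "y \<in> (\<lambda>(i, v). x(i := v)) ` ?S" by force
  next
    fix y assume "y \<in> (\<lambda>(i, v). x(i := v)) ` ?S"
    then obtain i v where "i < n" "v < q" "v \<noteq> x i" "P y" "y = x(i := v)" by auto
    then show "y \<in> {y \<in> hamming_verts n q. hamming_adj n x y \<and> P y}"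
      using hamming_adj_fun_upd_iff[OF x, of y] by auto
  qed
  moreover have "inj_on (\<lambda>(i, v). x(i := v)) ?S"
    by (rule inj_onI) (auto dest: fun_upd_eq_fun_upd_neq)
  ultimately show ?thesis
    by (simp add: card_image)
qed

lemma card_hamming_neighbours:
  "x \<in> hamming_verts n q \<Longrightarrow> card {y \<in> hamming_verts n q. hamming_adj n x y} = n * (q - 1)"
  using card_hamming_neighbours_filter[of x n q "\<lambda>_. True"]
  by (simp add: hamming_verts_less card_less_neq)

lemma card_neighbours_two_colours:
  fixes f :: "(nat \<Rightarrow> nat) \<Rightarrow> nat"
  assumes "x \<in> hamming_verts n q" and "\<And>y. y \<in> hamming_verts n q \<Longrightarrow> f y = 1 \<or> f y = 2"
  shows "card {y \<in> hamming_verts n q. hamming_adj n x y \<and> f y = 1}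
       + card {y \<in> hamming_verts n q. hamming_adj n x y \<and> f y = 2} = n * (q - 1)"
proof -
  let ?A = "{y \<in> hamming_verts n q. hamming_adj n x y \<and> f y = 1}"
  let ?B = "{y \<in> hamming_verts n q. hamming_adj n x y \<and> f y = 2}"
  have "{y \<in> hamming_verts n q. hamming_adj n x y} = ?A \<union> ?B"
    using assms(2) by auto
  moreover have "card (?A \<union> ?B) = card ?A + card ?B"
    by (rule card_Un_disjoint) (auto simp: finite_hamming_verts)
  ultimately show ?thesis
    using card_hamming_neighbours[OF assms(1)] by simp
qed

lemma mod_add_right_cancel_less:
  "a < q \<Longrightarrow> b < q \<Longrightarrow> (a + z) mod q = (b + z) mod q \<Longrightarrow> (a::nat) = b"
  using cong_add_rcancel_nat[of a z b q] by (simp add: cong_def)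

lemma mod_diff_cancel_less:
  assumes "a < q" "b < q" "(z + (q - a)) mod q = (z + (q - b)) mod q"
  shows "(a::nat) = b"
proof -
  have "[q - a = q - b] (mod q)"
    using assms(3) cong_add_lcancel_nat[of z "q - a" "q - b" q] by (simp add: cong_def)
  then have "[q - a + (a + b) = q - b + (a + b)] (mod q)"
    by (rule cong_add) (rule cong_refl)
  then have "[q + b = q + a] (mod q)"
    using assms(1,2) by (simp add: add_ac)
  then show ?thesis
    using assms(1,2) by (simp add: cong_add_lcancel_nat cong_def)
qed

lemma card_add_mod_less:
  assumes "0 < q" "t \<le> q"
  shows "card {s. s < q \<and> (s + z) mod q < t} = (t::nat)"
proof -
  let ?h = "\<lambda>s. (s + z) mod q"
  have inj: "inj_on ?h {..<q}"
    by (rule inj_onI) (auto dest: mod_add_right_cancel_less)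
  have "?h ` {..<q} = {..<q}"
    by (rule endo_inj_surj) (use inj assms in auto)
  then have "?h ` {s. s < q \<and> ?h s < t} = {..<t}"
    using assms by (auto simp: image_iff)
  moreover have "card (?h ` {s. s < q \<and> ?h s < t}) = card {s. s < q \<and> ?h s < t}"
    by (rule card_image, rule inj_on_subset[OF inj]) auto
  ultimately show ?thesis
    by simp
qed

lemma block_index_less: "j < n \<Longrightarrow> i < q \<Longrightarrow> j * q + i < q * (n::nat)"
proof -
  assume "j < n" "i < q"
  then have "j * q + i < (j + 1) * q" by simp
  also have "\<dots> \<le> n * q" using \<open>j < n\<close> by (intro mult_right_mono) auto
  finally show ?thesis by (simp add: mult.commute)
qed

lemma block_index_inj:
  assumes "i < q" "i' < q" "j * q + i = j' * q + (i'::nat)"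
  shows "j = j' \<and> i = i'"
proof -
  have "j = (j * q + i) div q" "j' = (j' * q + i') div q"
    using assms(1,2) by simp_all
  with assms(3) have "j = j'" by simp
  with assms(3) show ?thesis by simp
qed

lemma sum_lessThan_add: "(\<Sum>p<a + (m::nat). F p) = (\<Sum>p<a. F p) + (\<Sum>l<m. F (a + l))"
  by (induction m) (simp_all add: add.assoc)

lemma sum_lessThan_mult_blocks: "(\<Sum>p<q * n. F p) = (\<Sum>j<n. \<Sum>i<q. F (j * q + (i::nat)))"
proof -
  have "(\<Sum>p<q * n. F p) = (\<Sum>j<n. sum F {j * q..<j * q + q})"
    by (simp add: sum.nat_group mult.commute)
  also have "\<dots> = (\<Sum>j<n. \<Sum>i<q. F (j * q + i))"
  proof (rule sum.cong[OF refl])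
    fix j
    have "sum F {j * q..<j * q + q} = sum F {0 + j * q..<q + j * q}" by (simp add: add.commute)
    also have "\<dots> = (\<Sum>i = 0..<q. F (i + j * q))" by (rule sum.shift_bounds_nat_ivl)
    finally show "sum F {j * q..<j * q + q} = (\<Sum>i<q. F (j * q + i))"
      by (simp add: atLeast0LessThan add.commute)
  qed
  finally show ?thesis .
qed

lemma sum_hamming_neighbours_indicator:
  assumes "x \<in> hamming_verts n q"
  shows "(\<Sum>j<n. \<Sum>a | a < q \<and> a \<noteq> x j. if P (x(j := a)) then 1 else 0 :: nat)
       = card {y \<in> hamming_verts n q. hamming_adj n x y \<and> P y}"
  unfolding card_hamming_neighbours_filter[OF assms]
  by (intro sum.cong refl) (simp add: sum.inter_filter[symmetric] conj_assoc)

section \<open>Perfect codes in \<open>H(q + 1, q)\<close>\<close>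

locale perfect_code =
  fixes C :: "(nat \<Rightarrow> nat) set" and q :: nat
  assumes perfect: "perfect_code_1 (q + 1) q C" and q_ge_2: "2 \<le> q"
begin

lemma code_subset: "C \<subseteq> hamming_verts (q + 1) q"
  using perfect by (simp add: perfect_code_1_def)

lemma card_code_ball:
  "x \<in> hamming_verts (q + 1) q \<Longrightarrow> card {z \<in> C. hamming_dist (q + 1) x z \<le> 1} = 1"
  using perfect by (simp add: perfect_code_1_def)

lemma nearest_codeword:
  assumes "x \<in> hamming_verts (q + 1) q"
  shows "\<exists>c\<in>C. hamming_dist (q + 1) x c \<le> 1"
proof -
  have "{z \<in> C. hamming_dist (q + 1) x z \<le> 1} \<noteq> {}"
    using card_code_ball[OF assms] by (metis card.empty zero_neq_one)
  then show ?thesis by blast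
qed

lemma nearest_codeword_unique:
  assumes "x \<in> hamming_verts (q + 1) q" "c1 \<in> C" "c2 \<in> C"
    and "hamming_dist (q + 1) x c1 \<le> 1" "hamming_dist (q + 1) x c2 \<le> 1"
  shows "c1 = c2"
  using card_code_ball[OF assms(1)] assms(2-) card_1_singletonE
  by (metis (mono_tags, lifting) mem_Collect_eq singletonD)

lemma codeword_eqI:
  assumes c1: "c1 \<in> C" and c2: "c2 \<in> C"
    and D: "{i. i < q + 1 \<and> c1 i \<noteq> c2 i} \<subseteq> {a, b}"
  shows "c1 = c2"
proof (rule ccontr)
  assume "c1 \<noteq> c2"
  with c1 c2 code_subset obtain i where i: "i < q + 1" "c1 i \<noteq> c2 i"
    by (metis hamming_verts_eqI subsetD)
  define x where "x = c1(i := c2 i)"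
  have "x \<in> hamming_verts (q + 1) q"
    using c1 c2 i code_subset
    by (auto simp: x_def intro: fun_upd_in_hamming_verts hamming_verts_less)
  moreover have "hamming_dist (q + 1) x c1 \<le> 1"
    by (rule hamming_dist_le_1I) (auto simp: x_def)
  moreover have "hamming_dist (q + 1) x c2 \<le> 1"
    by (rule hamming_dist_le_1I[where j = "if i = a then b else a"])
      (use D i in \<open>auto simp: x_def\<close>)
  ultimately have "c1 = c2"
    using nearest_codeword_unique c1 c2 by blast
  with \<open>c1 \<noteq> c2\<close> show False ..
qed

lemma codeword_eq_if_near:
  assumes "c1 \<in> C" "c2 \<in> C"
    and "{j. j < q + 1 \<and> c1 j \<noteq> x1 j} \<subseteq> {i}" "{j. j < q + 1 \<and> x1 j \<noteq> x2 j} \<subseteq> {l}"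
    and "{j. j < q + 1 \<and> c2 j \<noteq> x2 j} \<subseteq> {i}"
  shows "c1 = c2"
proof -
  have "{j. j < q + 1 \<and> c1 j \<noteq> x2 j} \<subseteq> {i} \<union> {l}"
    using assms(3,4) by (rule differ_subset_trans)
  moreover have "{j. j < q + 1 \<and> x2 j \<noteq> c2 j} \<subseteq> {i}"
    using assms(5) by auto
  ultimately have "{j. j < q + 1 \<and> c1 j \<noteq> c2 j} \<subseteq> {i} \<union> {l} \<union> {i}"
    by (rule differ_subset_trans)
  then show ?thesis
    using assms(1,2) by (intro codeword_eqI[of _ _ i l]) auto
qed

text \<open>If no codeword started with \<open>u\<close>, the nearest codewords of the words \<open>(u, 0, b)\<close> would each
  differ from them in a single position of \<open>u\<close>, and these positions would have to be distinct
  for the \<open>q\<close> values of \<open>b\<close>, but \<open>u\<close> has only \<open>q - 1\<close> positions.\<close>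
lemma codeword_with_prefix:
  assumes u: "\<forall>i<q - 1. u i < q"
  shows "\<exists>c\<in>C. \<forall>i<q - 1. c i = u i"
proof (rule ccontr)
  assume none: "\<not> ?thesis"
  define w where "w b = (\<lambda>i. if i < q - 1 then u i else if i = q then b else 0)" for b
  have "w b \<in> hamming_verts (q + 1) q" if "b < q" for b
    using u that q_ge_2 by (auto simp: w_def hamming_verts_def)
  then have "\<forall>b. \<exists>c. b < q \<longrightarrow> c \<in> C \<and> hamming_dist (q + 1) (w b) c \<le> 1"
    using nearest_codeword by blast
  then obtain cw
    where cw: "\<And>b. b < q \<Longrightarrow> cw b \<in> C \<and> hamming_dist (q + 1) (w b) (cw b) \<le> 1"
    by metis
  have "\<exists>i<q - 1. {j. j < q + 1 \<and> cw b j \<noteq> w b j} \<subseteq> {i}" if b: "b < q" for b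
  proof -
    obtain i where "i < q - 1" "cw b i \<noteq> u i"
      using none cw[OF b] by blast
    moreover have "hamming_dist (q + 1) (cw b) (w b) \<le> 1"
      using cw[OF b] hamming_dist_commute by simp
    ultimately show ?thesis
      by (intro exI[of _ i] conjI hamming_dist_le_1_differ) (auto simp: w_def)
  qed
  then obtain ib where ib: "\<And>b. b < q \<Longrightarrow> ib b < q - 1"
    and near: "\<And>b. b < q \<Longrightarrow> {j. j < q + 1 \<and> cw b j \<noteq> w b j} \<subseteq> {ib b}"
    by metis
  have cw_last: "cw b q = b" if "b < q" for b
  proof -
    have "\<not> q < q - 1" "q \<notin> {ib b}" using ib[OF that] by auto
    then show ?thesis using near[OF that] by (auto simp: w_def)
  qed
  have "inj_on ib {..<q}"
  proof (rule inj_onI)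
    fix b1 b2 assume b: "b1 \<in> {..<q}" "b2 \<in> {..<q}" "ib b1 = ib b2"
    have b1: "b1 < q" and b2: "b2 < q" using b by auto
    have "{j. j < q + 1 \<and> w b1 j \<noteq> w b2 j} \<subseteq> {q}"
      by (auto simp: w_def)
    moreover have "{j. j < q + 1 \<and> cw b2 j \<noteq> w b2 j} \<subseteq> {ib b1}"
      using near[OF b2] b(3) by simp
    ultimately have "cw b1 = cw b2"
      by (rule codeword_eq_if_near[OF conjunct1[OF cw[OF b1]] conjunct1[OF cw[OF b2]] near[OF b1]])
    then show "b1 = b2"
      using cw_last b by (metis lessThan_iff)
  qed
  moreover have "ib ` {..<q} \<subseteq> {..<q - 1}"
    using ib by auto
  ultimately have "card {..<q} \<le> card {..<q - 1}"
    by (metis card_inj_on_le finite_lessThan)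
  with q_ge_2 show False by simp
qed

definition codeword_of :: "(nat \<Rightarrow> nat) \<Rightarrow> nat \<Rightarrow> nat" where
  "codeword_of u = (SOME c. c \<in> C \<and> (\<forall>i<q - 1. c i = u i))"

lemma prefix_less: "w \<in> hamming_verts q q \<Longrightarrow> \<forall>i<q - 1. w i < q"
  by (auto simp: hamming_verts_def)

lemma codeword_of:
  assumes "w \<in> hamming_verts q q"
  shows "codeword_of w \<in> C" "\<And>i. i < q - 1 \<Longrightarrow> codeword_of w i = w i"
  using someI_ex[OF codeword_with_prefix[OF prefix_less[OF assms], unfolded Bex_def]]
  by (simp_all add: codeword_of_def)

lemma codeword_of_cong: "(\<forall>i<q - 1. u i = u' i) \<Longrightarrow> codeword_of u = codeword_of u'"
  unfolding codeword_of_def by simp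

lemma codeword_of_less: "w \<in> hamming_verts q q \<Longrightarrow> j < q + 1 \<Longrightarrow> codeword_of w j < q"
  using codeword_of(1) code_subset by (auto simp: hamming_verts_def)

definition syndrome :: "(nat \<Rightarrow> nat) \<Rightarrow> nat" where
  "syndrome w = (w (q - 1) + (q - codeword_of w (q - 1))) mod q"

definition code_tail :: "(nat \<Rightarrow> nat) \<Rightarrow> nat" where
  "code_tail w = codeword_of w q"

lemma syndrome_less: "syndrome w < q"
  using q_ge_2 by (simp add: syndrome_def)

lemma code_tail_less: "w \<in> hamming_verts q q \<Longrightarrow> code_tail w < q"
  unfolding code_tail_def by (rule codeword_of_less) auto

lemma codeword_of_fun_upd_neq:
  assumes w: "w \<in> hamming_verts q q" and i: "i < q - 1" and v: "v < q" "v \<noteq> w i"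
  shows "codeword_of (w(i := v)) (q - 1) \<noteq> codeword_of w (q - 1)"
proof
  let ?c' = "codeword_of (w(i := v))" and ?c = "codeword_of w"
  assume eq: "?c' (q - 1) = ?c (q - 1)"
  have w': "w(i := v) \<in> hamming_verts q q"
    using w i v(1) by (intro fun_upd_in_hamming_verts) auto
  have pre': "?c' j = (w(i := v)) j" and pre: "?c j = w j" if "j < q - 1" for j
    using codeword_of(2) w w' that by blast+
  have "{j. j < q + 1 \<and> ?c' j \<noteq> ?c j} \<subseteq> {i, q}"
  proof
    fix j assume j: "j \<in> {j. j < q + 1 \<and> ?c' j \<noteq> ?c j}"
    then have "j < q + 1" by simp
    then consider "j < q - 1" | "j = q - 1" | "j = q" by linarith
    then show "j \<in> {i, q}"
    proof cases
      case 1
      then have "(w(i := v)) j \<noteq> w j" using j pre pre' by simp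
      then show ?thesis by (simp split: if_splits)
    qed (use j eq in auto)
  qed
  then have "?c' = ?c"
    using codeword_eqI codeword_of(1) w w' by blast
  then have "(w(i := v)) i = w i"
    using pre pre' i by metis
  with v show False by simp
qed

lemma syndrome_fun_upd_neq:
  assumes w: "w \<in> hamming_verts q q" and i: "i < q" and v: "v < q" "v \<noteq> w i"
  shows "syndrome (w(i := v)) \<noteq> syndrome w"
proof (cases "i = q - 1")
  case True
  have c: "codeword_of (w(i := v)) = codeword_of w"
    using True by (intro codeword_of_cong) simp
  have "w (q - 1) < q" "v \<noteq> w (q - 1)"
    using w i v True by (simp_all add: hamming_verts_less)
  then have "(v + z) mod q \<noteq> (w (q - 1) + z) mod q" for z
    using v(1) mod_add_right_cancel_less by blast
  then show ?thesis
    using True c by (simp add: syndrome_def)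
next
  case False
  have "w(i := v) \<in> hamming_verts q q"
    using w i v(1) by (rule fun_upd_in_hamming_verts)
  then have "codeword_of (w(i := v)) (q - 1) < q" "codeword_of w (q - 1) < q"
    using codeword_of_less w by auto
  moreover have "codeword_of (w(i := v)) (q - 1) \<noteq> codeword_of w (q - 1)"
    using codeword_of_fun_upd_neq w i False v by simp
  ultimately show ?thesis
    using False mod_diff_cancel_less by (simp add: syndrome_def) blast
qed

text \<open>Equal syndromes force the extending codewords to agree in position \<open>q - 1\<close> unless the words
  differ there, so these codewords are at distance at most 2.\<close>
lemma codeword_of_eqI:
  assumes w1: "w1 \<in> hamming_verts q q" and w2: "w2 \<in> hamming_verts q q"
    and D: "{i. i < q \<and> w1 i \<noteq> w2 i} \<subseteq> {a, b}"
    and s: "syndrome w1 = syndrome w2" and t: "code_tail w1 = code_tail w2"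
  shows "codeword_of w1 = codeword_of w2"
proof -
  let ?c1 = "codeword_of w1" and ?c2 = "codeword_of w2"
  have mid: "q - 1 \<in> {a, b}" if "?c1 (q - 1) \<noteq> ?c2 (q - 1)"
  proof -
    have "?c1 (q - 1) < q" "?c2 (q - 1) < q"
      using codeword_of_less w1 w2 by auto
    with s that have "w1 (q - 1) \<noteq> w2 (q - 1)"
      unfolding syndrome_def using mod_diff_cancel_less by metis
    then have "q - 1 \<in> {i. i < q \<and> w1 i \<noteq> w2 i}" using q_ge_2 by simp
    then show ?thesis using D by blast
  qed
  have "{j. j < q + 1 \<and> ?c1 j \<noteq> ?c2 j} \<subseteq> {a, b}"
  proof
    fix j assume j: "j \<in> {j. j < q + 1 \<and> ?c1 j \<noteq> ?c2 j}"
    then have "j < q + 1" by simp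
    then consider "j < q - 1" | "j = q - 1" | "j = q" by linarith
    then show "j \<in> {a, b}"
    proof cases
      case 1
      then have "j \<in> {i. i < q \<and> w1 i \<noteq> w2 i}" using j codeword_of(2) w1 w2 by auto
      with D show ?thesis by blast
    qed (use j mid t in \<open>auto simp: code_tail_def\<close>)
  qed
  then show ?thesis
    using codeword_eqI codeword_of(1) w1 w2 by blast
qed

lemma syndrome_code_tail_eqI:
  assumes w1: "w1 \<in> hamming_verts q q" and w2: "w2 \<in> hamming_verts q q"
    and D: "{i. i < q \<and> w1 i \<noteq> w2 i} \<subseteq> {a, b}"
    and s: "syndrome w1 = syndrome w2" and t: "code_tail w1 = code_tail w2"
  shows "w1 = w2"
proof -
  have c: "codeword_of w1 = codeword_of w2"
    using codeword_of_eqI[OF assms] .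
  have "w1 (q - 1) < q" "w2 (q - 1) < q"
    using w1 w2 q_ge_2 by (auto simp: hamming_verts_less)
  with s c have "w1 (q - 1) = w2 (q - 1)"
    unfolding syndrome_def using mod_add_right_cancel_less by metis
  moreover have "w1 j = w2 j" if "j < q - 1" for j
    using codeword_of(2)[OF w1 that] codeword_of(2)[OF w2 that] c by simp
  ultimately have "w1 j = w2 j" if "j < q" for j
    using that by (cases "j = q - 1") auto
  then show "w1 = w2"
    using w1 w2 hamming_verts_eqI by blast
qed

lemma bij_betw_neighbours_syndrome_code_tail:
  assumes w: "w \<in> hamming_verts q q"
  shows "bij_betw (\<lambda>(i, v). (syndrome (w(i := v)), code_tail (w(i := v))))
           (SIGMA i:{..<q}. {v. v < q \<and> v \<noteq> w i})
           ({a. a < q \<and> a \<noteq> syndrome w} \<times> {..<q})"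
proof -
  let ?h = "\<lambda>(i, v). (syndrome (w(i := v)), code_tail (w(i := v)))"
  let ?A = "SIGMA i:{..<q}. {v. v < q \<and> v \<noteq> w i}"
  let ?B = "{a. a < q \<and> a \<noteq> syndrome w} \<times> {..<q}"
  have inj: "inj_on ?h ?A"
  proof (rule inj_onI, clarify)
    fix i1 v1 i2 v2
    assume a: "i1 < q" "v1 < q" "v1 \<noteq> w i1" "i2 < q" "v2 < q" "v2 \<noteq> w i2"
      and eq: "syndrome (w(i1 := v1)) = syndrome (w(i2 := v2))"
        "code_tail (w(i1 := v1)) = code_tail (w(i2 := v2))"
    have "{i. i < q \<and> (w(i1 := v1)) i \<noteq> (w(i2 := v2)) i} \<subseteq> {i1, i2}"
      by auto
    then have "w(i1 := v1) = w(i2 := v2)"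
      using syndrome_code_tail_eqI fun_upd_in_hamming_verts[OF w] a eq by blast
    with a(3) show "i1 = i2 \<and> v1 = v2"
      by (rule fun_upd_eq_fun_upd_neq)
  qed
  have sub: "?h ` ?A \<subseteq> ?B"
    using syndrome_fun_upd_neq[OF w] syndrome_less code_tail_less fun_upd_in_hamming_verts[OF w]
    by auto
  have "card ?A = q * (q - 1)"
    using w by (simp add: card_less_neq hamming_verts_less)
  moreover have "card ?B = q * (q - 1)"
    by (simp add: card_cartesian_product card_less_neq syndrome_less)
  ultimately have "?h ` ?A = ?B"
    using sub by (intro card_subset_eq) (auto simp: card_image[OF inj])
  with inj show ?thesis
    by (simp add: bij_betw_def)
qed

lemma card_neighbours_syndrome_code_tail:
  assumes w: "w \<in> hamming_verts q q"
  shows "(\<Sum>i<q. card {v. v < q \<and> v \<noteq> w i \<and> R (syndrome (w(i := v))) (code_tail (w(i := v)))})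
       = (\<Sum>a | a < q \<and> a \<noteq> syndrome w. card {s. s < q \<and> R a s})"
proof -
  let ?h = "\<lambda>(i, v). (syndrome (w(i := v)), code_tail (w(i := v)))"
  let ?A = "SIGMA i:{..<q}. {v. v < q \<and> v \<noteq> w i}"
  let ?B = "{a. a < q \<and> a \<noteq> syndrome w} \<times> {..<q}"
  have bij: "bij_betw ?h ?A ?B"
    by (rule bij_betw_neighbours_syndrome_code_tail[OF w])
  have "(\<Sum>i<q. card {v. v < q \<and> v \<noteq> w i \<and> R (syndrome (w(i := v))) (code_tail (w(i := v)))})
      = card (SIGMA i:{..<q}.
          {v. v < q \<and> v \<noteq> w i \<and> R (syndrome (w(i := v))) (code_tail (w(i := v)))})"
    by (rule card_SigmaI[symmetric]) auto
  also have "(SIGMA i:{..<q}.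
      {v. v < q \<and> v \<noteq> w i \<and> R (syndrome (w(i := v))) (code_tail (w(i := v)))})
      = {p \<in> ?A. case_prod R (?h p)}"
    by auto
  also have "card {p \<in> ?A. case_prod R (?h p)} = card {z \<in> ?B. case_prod R z}"
    by (rule bij_betw_same_card, rule bij_betw_Collect[OF bij]) simp
  also have "{z \<in> ?B. case_prod R z} = (SIGMA a:{a. a < q \<and> a \<noteq> syndrome w}. {s. s < q \<and> R a s})"
    by auto
  also have "card \<dots> = (\<Sum>a | a < q \<and> a \<noteq> syndrome w. card {s. s < q \<and> R a s})"
    by (rule card_SigmaI) auto
  finally show ?thesis .
qed

lemma syndrome_code_tail_surj:
  assumes "a < q" "s < q"
  shows "\<exists>w\<in>hamming_verts q q. syndrome w = a \<and> code_tail w = s"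
proof -
  have from_nbr: "\<exists>w'\<in>hamming_verts q q. syndrome w' = a' \<and> code_tail w' = s"
    if w: "w \<in> hamming_verts q q" and "a' < q" "a' \<noteq> syndrome w" for w a'
  proof -
    have "(a', s) \<in> (\<lambda>(i, v). (syndrome (w(i := v)), code_tail (w(i := v))))
        ` (SIGMA i:{..<q}. {v. v < q \<and> v \<noteq> w i})"
      using bij_betw_imp_surj_on[OF bij_betw_neighbours_syndrome_code_tail[OF w]] that assms(2)
      by simp
    then show ?thesis
      using fun_upd_in_hamming_verts[OF w] by auto
  qed
  have zero: "(\<lambda>_. 0) \<in> hamming_verts q q"
    using q_ge_2 by (simp add: hamming_verts_def)
  show ?thesis
  proof (cases "a = syndrome (\<lambda>_. 0)")
    case False
    with from_nbr[OF zero assms(1)] show ?thesis by blast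
  next
    case True
    define a' where "a' = (a + 1) mod q"
    have "a' \<noteq> a" "a' < q"
      using assms(1) q_ge_2 by (auto simp: a'_def mod_if)
    then obtain w' where "w' \<in> hamming_verts q q" "syndrome w' = a'"
      using from_nbr[OF zero] True by metis
    with \<open>a' \<noteq> a\<close> from_nbr assms(1) show ?thesis by metis
  qed
qed

end

section \<open>Colorings with a face partition\<close>

lemma is_coloring_q_ge_2:
  assumes "is_coloring n q b c f"
  shows "2 \<le> q"
proof (rule ccontr)
  assume q: "\<not> 2 \<le> q"
  have zero: "x = (\<lambda>_. 0)" if x: "x \<in> hamming_verts n q" for x
  proof (rule ext)
    fix i show "x i = 0"
    proof (cases "i < n")
      case True
      with x q show ?thesis
        using hamming_verts_less[OF x True] by linarith
    next
      case False
      with x show ?thesis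
        by (simp add: hamming_verts_def)
    qed
  qed
  have "f ` hamming_verts n q = {1, 2}"
    using assms by (simp add: is_coloring_def)
  then obtain x1 x2 where x: "x1 \<in> hamming_verts n q" "f x1 = 1" "x2 \<in> hamming_verts n q" "f x2 = 2"
    by (metis imageE insertI1 insertI2 singletonI)
  have "x1 = x2"
    using zero[OF x(1)] zero[OF x(3)] by simp
  with x show False
    by simp
qed

locale face_partitioned_coloring =
  fixes n q b c k :: nat and f :: "(nat \<Rightarrow> nat) \<Rightarrow> nat" and P :: "(nat \<Rightarrow> nat) set set"
  assumes coloring: "is_coloring n q b c f"
    and faces: "\<forall>F\<in>P. is_face n q k F"
    and disjoint: "\<forall>F\<in>P. \<forall>G\<in>P. F \<noteq> G \<longrightarrow> F \<inter> G = {}"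
    and union: "\<Union>P = {x \<in> hamming_verts n q. f x = 1}"
begin

lemma colour_cases: "x \<in> hamming_verts n q \<Longrightarrow> f x = 1 \<or> f x = 2"
  using coloring unfolding is_coloring_def by blast

definition face_dirs :: "(nat \<Rightarrow> nat) set \<Rightarrow> nat set" where
  "face_dirs F = (SOME K. \<exists>a. K \<subseteq> {..<n} \<and> card K = k \<and> (\<forall>i\<in>{..<n} - K. a i < q) \<and>
      F = {x \<in> hamming_verts n q. \<forall>i\<in>{..<n} - K. x i = a i})"

definition face_of :: "(nat \<Rightarrow> nat) \<Rightarrow> (nat \<Rightarrow> nat) set" where
  "face_of x = (SOME F. F \<in> P \<and> x \<in> F)"

abbreviation free_coords :: "(nat \<Rightarrow> nat) \<Rightarrow> nat set" where
  "free_coords x \<equiv> face_dirs (face_of x)"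

lemma face_dirs:
  assumes "F \<in> P"
  shows "face_dirs F \<subseteq> {..<n}" "card (face_dirs F) = k"
    "\<exists>a. F = {x \<in> hamming_verts n q. \<forall>i\<in>{..<n} - face_dirs F. x i = a i}"
proof -
  have "\<exists>K a. K \<subseteq> {..<n} \<and> card K = k \<and> (\<forall>i\<in>{..<n} - K. a i < q) \<and>
      F = {x \<in> hamming_verts n q. \<forall>i\<in>{..<n} - K. x i = a i}"
    using faces assms by (simp add: is_face_def)
  then have "\<exists>a. face_dirs F \<subseteq> {..<n} \<and> card (face_dirs F) = k \<and>
      (\<forall>i\<in>{..<n} - face_dirs F. a i < q) \<and>
      F = {x \<in> hamming_verts n q. \<forall>i\<in>{..<n} - face_dirs F. x i = a i}"
    unfolding face_dirs_def by (rule someI_ex)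
  then show "face_dirs F \<subseteq> {..<n}" "card (face_dirs F) = k"
    "\<exists>a. F = {x \<in> hamming_verts n q. \<forall>i\<in>{..<n} - face_dirs F. x i = a i}" by blast+
qed

lemma face_eq_at:
  assumes "F \<in> P" "x \<in> F"
  shows "F = {y \<in> hamming_verts n q. \<forall>i\<in>{..<n} - face_dirs F. y i = x i}"
proof -
  obtain a where a: "F = {x \<in> hamming_verts n q. \<forall>i\<in>{..<n} - face_dirs F. x i = a i}"
    using face_dirs(3)[OF assms(1)] by blast
  with assms(2) have "\<forall>i\<in>{..<n} - face_dirs F. x i = a i" by blast
  with a show ?thesis by auto
qed

lemma face_of:
  assumes "x \<in> hamming_verts n q" "f x = 1"
  shows "face_of x \<in> P" "x \<in> face_of x"
proof -
  have "\<exists>F. F \<in> P \<and> x \<in> F" using assms union by blast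
  then have "face_of x \<in> P \<and> x \<in> face_of x" unfolding face_of_def by (rule someI_ex)
  then show "face_of x \<in> P" "x \<in> face_of x" by auto
qed

lemma face_of_eq:
  assumes "x \<in> hamming_verts n q" "f x = 1"
  shows "face_of x = {y \<in> hamming_verts n q. \<forall>i\<in>{..<n} - free_coords x. y i = x i}"
    "free_coords x \<subseteq> {..<n}" "card (free_coords x) = k"
  using face_eq_at[OF face_of[OF assms]] face_dirs[OF face_of(1)[OF assms]] by simp_all

lemma mem_face_of:
  assumes "x \<in> hamming_verts n q" "f x = 1" "x' \<in> face_of x"
  shows "x' \<in> hamming_verts n q" "f x' = 1" "face_of x' = face_of x"
proof -
  show x': "x' \<in> hamming_verts n q" "f x' = 1"
    using union face_of[OF assms(1,2)] assms(3) by blast+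
  show "face_of x' = face_of x"
    using disjoint face_of[OF x'] face_of[OF assms(1,2)] assms(3) by blast
qed

lemma fun_upd_in_face_of_iff:
  assumes x: "x \<in> hamming_verts n q" "f x = 1" and j: "j < n" and a: "a < q" "a \<noteq> x j"
  shows "x(j := a) \<in> face_of x \<longleftrightarrow> j \<in> free_coords x"
proof
  assume "x(j := a) \<in> face_of x"
  then have "\<forall>i\<in>{..<n} - free_coords x. (x(j := a)) i = x i"
    using face_of_eq[OF x] by blast
  with j a show "j \<in> free_coords x" by (metis DiffI fun_upd_same lessThan_iff)
next
  assume "j \<in> free_coords x"
  moreover have "x(j := a) \<in> hamming_verts n q"
    using x(1) j a(1) by (rule fun_upd_in_hamming_verts)
  ultimately show "x(j := a) \<in> face_of x"
    using face_of_eq[OF x] by auto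
qed

lemma fun_upd_in_face_of_if_free:
  assumes x: "x \<in> hamming_verts n q" and j: "j < n" and a: "a < q"
    and f1: "f (x(j := a)) = 1" and free: "j \<in> free_coords (x(j := a))"
  shows "f x = 1" "x(j := a) \<in> face_of x"
proof -
  let ?x' = "x(j := a)"
  have x': "?x' \<in> hamming_verts n q"
    using x j a by (rule fun_upd_in_hamming_verts)
  have "\<forall>i\<in>{..<n} - free_coords ?x'. x i = ?x' i"
    using free by auto
  then have "x \<in> face_of ?x'"
    using face_of_eq(1)[OF x' f1] x by blast
  then have "f x = 1" "face_of x = face_of ?x'"
    using mem_face_of[OF x' f1] by auto
  then show "f x = 1" "?x' \<in> face_of x"
    using face_of(2)[OF x' f1] by simp_all
qed

lemma card_neighbours_in_face:
  assumes x: "x \<in> hamming_verts n q" "f x = 1"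
  shows "card {x' \<in> hamming_verts n q. hamming_adj n x x' \<and> x' \<in> face_of x} = k * (q - 1)"
proof -
  have "card {x' \<in> hamming_verts n q. hamming_adj n x x' \<and> x' \<in> face_of x}
      = (\<Sum>j<n. card {a. a < q \<and> a \<noteq> x j \<and> x(j := a) \<in> face_of x})"
    by (rule card_hamming_neighbours_filter[OF x(1)])
  also have "\<dots> = (\<Sum>j<n. if j \<in> free_coords x then q - 1 else 0)"
  proof (rule sum.cong[OF refl])
    fix j assume j: "j \<in> {..<n}"
    have "{a. a < q \<and> a \<noteq> x j \<and> x(j := a) \<in> face_of x}
        = (if j \<in> free_coords x then {a. a < q \<and> a \<noteq> x j} else {})"
      using fun_upd_in_face_of_iff[OF x, of j] j by auto
    then show "card {a. a < q \<and> a \<noteq> x j \<and> x(j := a) \<in> face_of x}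
        = (if j \<in> free_coords x then q - 1 else 0)"
      using x(1) j by (simp add: card_less_neq hamming_verts_less)
  qed
  also have "\<dots> = (\<Sum>j\<in>{..<n} \<inter> free_coords x. q - 1)"
    by (simp add: sum.If_cases)
  also have "{..<n} \<inter> free_coords x = free_coords x"
    using face_of_eq(2)[OF x] by blast
  finally show ?thesis
    using face_of_eq(3)[OF x] by simp
qed


lemma card_neighbours_in_face_colour_1:
  assumes x: "x \<in> hamming_verts n q" "f x = 1"
  shows "card {x' \<in> hamming_verts n q. hamming_adj n x x' \<and> f x' = 1 \<and> x' \<in> face_of x}
    = k * (q - 1)"
proof -
  have "{x' \<in> hamming_verts n q. hamming_adj n x x' \<and> f x' = 1 \<and> x' \<in> face_of x}
      = {x' \<in> hamming_verts n q. hamming_adj n x x' \<and> x' \<in> face_of x}"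
    using mem_face_of(2)[OF x] by blast
  with card_neighbours_in_face[OF x] show ?thesis by simp
qed

end

section \<open>The lifted coloring\<close>

locale lifting = perfect_code C q + face_partitioned_coloring n q b c k f P
  for C q n b c k f P +
  fixes m t :: nat
  assumes gap: "int m = int k * (int q - 1) - main_eigenvalue n q b c"
    and t_pos: "1 \<le> t" and t_le: "t \<le> q"
begin

definition N :: nat where
  "N = q * n + m"

definition block :: "nat \<Rightarrow> (nat \<Rightarrow> nat) \<Rightarrow> nat \<Rightarrow> nat" where
  "block j y = (\<lambda>i. if i < q then y (j * q + i) else 0)"

definition proj :: "(nat \<Rightarrow> nat) \<Rightarrow> nat \<Rightarrow> nat" where
  "proj y = (\<lambda>j. if j < n then syndrome (block j y) else 0)"

definition extra_sum :: "(nat \<Rightarrow> nat) \<Rightarrow> nat" where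
  "extra_sum y = (\<Sum>l<m. y (q * n + l))"

definition tail_sum :: "(nat \<Rightarrow> nat) \<Rightarrow> nat" where
  "tail_sum y = (\<Sum>j\<in>{..<n} - free_coords (proj y). code_tail (block j y)) + extra_sum y"

definition lift :: "(nat \<Rightarrow> nat) \<Rightarrow> nat" where
  "lift y = (if f (proj y) = 1 \<and> tail_sum y mod q < t then 1 else 2)"

text \<open>The colour of \<open>y\<close> after block \<open>j\<close> is replaced by a word with syndrome \<open>a\<close> and code
  tail \<open>s\<close>.\<close>
definition lift_at :: "(nat \<Rightarrow> nat) \<Rightarrow> nat \<Rightarrow> nat \<Rightarrow> nat \<Rightarrow> nat" where
  "lift_at y j a s = (if f ((proj y)(j := a)) = 1 \<and>
      ((\<Sum>j'\<in>{..<n} - free_coords ((proj y)(j := a)). if j' = j then s else code_tail (block j' y))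
        + extra_sum y) mod q < t
     then 1 else 2)"

lemma block_in_hamming_verts:
  assumes "y \<in> hamming_verts N q" "j < n"
  shows "block j y \<in> hamming_verts q q"
proof -
  have "y (j * q + i) < q" if "i < q" for i
  proof -
    have "j * q + i < N" using block_index_less[OF assms(2) that] by (simp add: N_def)
    with assms(1) show ?thesis by (simp add: hamming_verts_less)
  qed
  then show ?thesis by (auto simp: block_def hamming_verts_def)
qed

lemma block_apply: "i < q \<Longrightarrow> block j y i = y (j * q + i)"
  by (simp add: block_def)

lemma proj_in_hamming_verts: "proj y \<in> hamming_verts n q"
  using syndrome_less by (auto simp: proj_def hamming_verts_def)

lemma block_fun_upd:
  assumes "i < q"
  shows "block j' (y(j * q + i := v)) = (if j' = j then (block j y)(i := v) else block j' y)"
proof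
  fix i'
  show "block j' (y(j * q + i := v)) i' = (if j' = j then (block j y)(i := v) else block j' y) i'"
  proof (cases "i' < q \<and> j' \<noteq> j")
    case True
    then have "j' * q + i' \<noteq> j * q + i" using block_index_inj[OF _ assms] by blast
    with True show ?thesis by (simp add: block_def)
  qed (auto simp: block_def assms)
qed

lemma proj_fun_upd:
  assumes "j < n" "i < q"
  shows "proj (y(j * q + i := v)) = (proj y)(j := syndrome ((block j y)(i := v)))"
  using assms by (auto simp: proj_def block_fun_upd)

lemma extra_sum_fun_upd:
  assumes "j < n" "i < q"
  shows "extra_sum (y(j * q + i := v)) = extra_sum y"
proof -
  have "q * n + l \<noteq> j * q + i" for l
    using block_index_less[OF assms] by linarith
  then show ?thesis by (simp add: extra_sum_def)
qed

lemma block_fun_upd_extra: "j < n \<Longrightarrow> block j (y(q * n + l := v)) = block j y"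
proof
  fix i assume j: "j < n"
  show "block j (y(q * n + l := v)) i = block j y i"
  proof (cases "i < q")
    case True
    then have "j * q + i \<noteq> q * n + l" using block_index_less[OF j] by fastforce
    then show ?thesis by (simp add: block_def)
  qed (simp add: block_def)
qed

lemma proj_fun_upd_extra: "proj (y(q * n + l := v)) = proj y"
  by (auto simp: proj_def block_fun_upd_extra)

lemma tail_sum_fun_upd_extra:
  assumes "l < m"
  shows "tail_sum (y(q * n + l := v)) + y (q * n + l) = tail_sum y + v"
proof -
  have "extra_sum (y(q * n + l := v)) = v + (\<Sum>l'\<in>{..<m} - {l}. y (q * n + l'))"
    unfolding extra_sum_def using assms by (subst sum.remove[of _ l]) auto
  moreover have "extra_sum y = y (q * n + l) + (\<Sum>l'\<in>{..<m} - {l}. y (q * n + l'))"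
    unfolding extra_sum_def using assms by (subst sum.remove[of _ l]) auto
  ultimately show ?thesis
    by (simp add: tail_sum_def proj_fun_upd_extra block_fun_upd_extra)
qed

lemma lift_fun_upd:
  assumes "j < n" "i < q"
  shows "lift (y(j * q + i := v)) =
    lift_at y j (syndrome ((block j y)(i := v))) (code_tail ((block j y)(i := v)))"
proof -
  let ?a = "syndrome ((block j y)(i := v))"
  have "(\<Sum>j'\<in>{..<n} - free_coords ((proj y)(j := ?a)). code_tail (block j' (y(j * q + i := v))))
      = (\<Sum>j'\<in>{..<n} - free_coords ((proj y)(j := ?a)).
          if j' = j then code_tail ((block j y)(i := v)) else code_tail (block j' y))"
    by (rule sum.cong[OF refl]) (simp add: block_fun_upd[OF assms(2)])
  then show ?thesis
    unfolding lift_def lift_at_def tail_sum_def proj_fun_upd[OF assms] extra_sum_fun_upd[OF assms]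
    by simp
qed

text \<open>A change in block \<open>j\<close> moves the projection to a neighbour \<open>(proj y)(j := a)\<close> and sets the code
  tail of block \<open>j\<close> to an arbitrary \<open>s\<close>, each pair \<open>(a, s)\<close> arising exactly once.\<close>
lemma card_lift_neighbours_split:
  assumes y: "y \<in> hamming_verts N q"
  shows "card {y' \<in> hamming_verts N q. hamming_adj N y y' \<and> lift y' = 1}
    = (\<Sum>j<n. \<Sum>a | a < q \<and> a \<noteq> proj y j. card {s. s < q \<and> lift_at y j a s = 1})
      + (\<Sum>l<m. card {v. v < q \<and> v \<noteq> y (q * n + l) \<and> lift (y(q * n + l := v)) = 1})"
proof -
  have "card {y' \<in> hamming_verts N q. hamming_adj N y y' \<and> lift y' = 1}
      = (\<Sum>p<q * n. card {v. v < q \<and> v \<noteq> y p \<and> lift (y(p := v)) = 1})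
      + (\<Sum>l<m. card {v. v < q \<and> v \<noteq> y (q * n + l) \<and> lift (y(q * n + l := v)) = 1})"
    unfolding card_hamming_neighbours_filter[OF y] unfolding N_def by (rule sum_lessThan_add)
  also have "(\<Sum>p<q * n. card {v. v < q \<and> v \<noteq> y p \<and> lift (y(p := v)) = 1})
      = (\<Sum>j<n. \<Sum>i<q. card {v. v < q \<and> v \<noteq> y (j * q + i) \<and> lift (y(j * q + i := v)) = 1})"
    by (rule sum_lessThan_mult_blocks)
  also have "\<dots> = (\<Sum>j<n. \<Sum>a | a < q \<and> a \<noteq> proj y j. card {s. s < q \<and> lift_at y j a s = 1})"
  proof (rule sum.cong[OF refl])
    fix j assume j: "j \<in> {..<n}"
    have "(\<Sum>i<q. card {v. v < q \<and> v \<noteq> y (j * q + i) \<and> lift (y(j * q + i := v)) = 1})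
       = (\<Sum>i<q. card {v. v < q \<and> v \<noteq> block j y i \<and>
            lift_at y j (syndrome ((block j y)(i := v))) (code_tail ((block j y)(i := v))) = 1})"
      using j by (intro sum.cong refl) (simp add: lift_fun_upd block_apply)
    also have "\<dots> = (\<Sum>a | a < q \<and> a \<noteq> syndrome (block j y). card {s. s < q \<and> lift_at y j a s = 1})"
      using block_in_hamming_verts[OF y] j by (intro card_neighbours_syndrome_code_tail) simp
    also have "syndrome (block j y) = proj y j"
      using j by (simp add: proj_def)
    finally show "(\<Sum>i<q. card {v. v < q \<and> v \<noteq> y (j * q + i) \<and> lift (y(j * q + i := v)) = 1})
       = (\<Sum>a | a < q \<and> a \<noteq> proj y j. card {s. s < q \<and> lift_at y j a s = 1})" .
  qed
  finally show ?thesis .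
qed

lemma lift_cases: "lift y = 1 \<or> lift y = 2"
  by (simp add: lift_def)

lemma lift_eq_1_proj:
  assumes "lift y = 1"
  shows "f (proj y) = 1"
proof (rule ccontr)
  assume "f (proj y) \<noteq> 1"
  then have "lift y = 2" by (simp add: lift_def)
  with assms show False by simp
qed

lemma lift_at_in_face:
  assumes j: "j < n" and a: "a < q" "a \<noteq> proj y j" and f1: "f (proj y) = 1"
    and in_face: "(proj y)(j := a) \<in> face_of (proj y)"
  shows "lift_at y j a s = lift y"
proof -
  let ?x = "proj y"
  have free: "free_coords ((proj y)(j := a)) = free_coords ?x" "f ((proj y)(j := a)) = 1"
    using mem_face_of[OF proj_in_hamming_verts f1 in_face] by simp_all
  have "j \<in> free_coords ?x"
    using fun_upd_in_face_of_iff[OF proj_in_hamming_verts f1 j a] in_face by blast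
  then have "(\<Sum>j'\<in>{..<n} - free_coords ((proj y)(j := a)).
        if j' = j then s else code_tail (block j' y))
      = (\<Sum>j'\<in>{..<n} - free_coords ?x. code_tail (block j' y))"
    unfolding free by (intro sum.cong) auto
  then show ?thesis
    using f1 free by (simp add: lift_at_def lift_def tail_sum_def)
qed

lemma lift_at_off_face:
  assumes j: "j < n" and a: "a < q" and f1: "f ((proj y)(j := a)) = 1"
    and off_face: "\<not> (f (proj y) = 1 \<and> (proj y)(j := a) \<in> face_of (proj y))"
  obtains A where "\<And>s. lift_at y j a s = (if (s + A) mod q < t then 1 else 2)"
proof -
  let ?x' = "(proj y)(j := a)"
  have "j \<notin> free_coords ?x'"
    using fun_upd_in_face_of_if_free[OF proj_in_hamming_verts j a f1] off_face by blast
  then have jin: "j \<in> {..<n} - free_coords ?x'" using j by simp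
  define A where "A = (\<Sum>j'\<in>({..<n} - free_coords ?x') - {j}. code_tail (block j' y)) + extra_sum y"
  have "(\<Sum>j'\<in>{..<n} - free_coords ?x'. if j' = j then s else code_tail (block j' y)) + extra_sum y
      = s + A" for s
    unfolding A_def by (subst sum.remove[OF _ jin]) (auto intro: sum.cong)
  then have "lift_at y j a s = (if (s + A) mod q < t then 1 else 2)" for s
    using f1 by (simp add: lift_at_def)
  then show thesis by (rule that)
qed

lemma card_lift_at:
  assumes j: "j < n" and a: "a < q" "a \<noteq> proj y j"
  shows "card {s. s < q \<and> lift_at y j a s = 1} =
    (if f ((proj y)(j := a)) = 1 then
       (if f (proj y) = 1 \<and> (proj y)(j := a) \<in> face_of (proj y)
        then (if lift y = 1 then q else 0) else t)
     else 0)"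
proof (cases "f ((proj y)(j := a)) = 1")
  case False
  then have "{s. s < q \<and> lift_at y j a s = 1} = {}"
    by (auto simp: lift_at_def)
  with False show ?thesis by simp
next
  case f1: True
  show ?thesis
  proof (cases "f (proj y) = 1 \<and> (proj y)(j := a) \<in> face_of (proj y)")
    case True
    then have "{s. s < q \<and> lift_at y j a s = 1} = (if lift y = 1 then {..<q} else {})"
      using lift_at_in_face[OF j a] by auto
    with f1 True show ?thesis by simp
  next
    case False
    obtain A where A: "\<And>s. lift_at y j a s = (if (s + A) mod q < t then 1 else 2)"
      using lift_at_off_face[OF j a(1) f1 False] by blast
    have "card {s. s < q \<and> lift_at y j a s = 1} = card {s. s < q \<and> (s + A) mod q < t}"
      by (rule arg_cong[where f = card]) (auto simp: A)
    also have "\<dots> = t"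
      using q_ge_2 t_le by (intro card_add_mod_less) simp_all
    finally show ?thesis
      using f1 False by auto
  qed
qed

lemma card_lift_extra:
  assumes y: "y \<in> hamming_verts N q" and l: "l < m"
  shows "card {v. v < q \<and> v \<noteq> y (q * n + l) \<and> lift (y(q * n + l := v)) = 1}
       = (if f (proj y) = 1 then t - (if lift y = 1 then 1 else 0) else 0)"
proof (cases "f (proj y) = 1")
  case False
  then have "{v. v < q \<and> v \<noteq> y (q * n + l) \<and> lift (y(q * n + l := v)) = 1} = {}"
    by (auto simp: lift_def proj_fun_upd_extra)
  with False show ?thesis by simp
next
  case True
  let ?z = "y (q * n + l)"
  have z: "?z < q" using y l by (simp add: hamming_verts_less N_def)
  define A where "A = tail_sum y - ?z"
  have tail: "tail_sum (y(q * n + l := v)) = v + A" for v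
    using tail_sum_fun_upd_extra[OF l, of y v] tail_sum_fun_upd_extra[OF l, of y 0]
    by (simp add: A_def)
  have "tail_sum y = ?z + A"
    using tail[of ?z] by simp
  then have z_in: "?z \<in> {v. v < q \<and> (v + A) mod q < t} \<longleftrightarrow> lift y = 1"
    using True z by (simp add: lift_def)
  have "{v. v < q \<and> v \<noteq> ?z \<and> lift (y(q * n + l := v)) = 1} = {v. v < q \<and> (v + A) mod q < t} - {?z}"
    using True by (auto simp: lift_def proj_fun_upd_extra tail)
  moreover have "card {v. v < q \<and> (v + A) mod q < t} = t"
    using q_ge_2 t_le by (intro card_add_mod_less) simp_all
  ultimately show ?thesis
    using True z_in by (auto simp: card_Diff_singleton_if)
qed

lemma card_lift_neighbours:
  assumes y: "y \<in> hamming_verts N q"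
  shows "card {y' \<in> hamming_verts N q. hamming_adj N y y' \<and> lift y' = 1}
    = t * card {x' \<in> hamming_verts n q. hamming_adj n (proj y) x' \<and>
                  f x' = 1 \<and> \<not> (f (proj y) = 1 \<and> x' \<in> face_of (proj y))}
      + (if lift y = 1 then q else 0) * card {x' \<in> hamming_verts n q. hamming_adj n (proj y) x' \<and>
                  f x' = 1 \<and> f (proj y) = 1 \<and> x' \<in> face_of (proj y)}
      + m * (if f (proj y) = 1 then t - (if lift y = 1 then 1 else 0) else 0)"
proof -
  let ?x = "proj y"
  let ?Q = "if lift y = 1 then q else 0"
  let ?off = "\<lambda>x'. f x' = 1 \<and> \<not> (f ?x = 1 \<and> x' \<in> face_of ?x)"
  let ?on = "\<lambda>x'. f x' = 1 \<and> f ?x = 1 \<and> x' \<in> face_of ?x"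
  have "(\<Sum>j<n. \<Sum>a | a < q \<and> a \<noteq> ?x j. card {s. s < q \<and> lift_at y j a s = 1})
      = (\<Sum>j<n. \<Sum>a | a < q \<and> a \<noteq> ?x j.
          t * (if ?off (?x(j := a)) then 1 else 0) + ?Q * (if ?on (?x(j := a)) then 1 else 0))"
  proof (intro sum.cong refl)
    fix j a assume "j \<in> {..<n}" "a \<in> {a. a < q \<and> a \<noteq> ?x j}"
    then show "card {s. s < q \<and> lift_at y j a s = 1}
      = t * (if ?off (?x(j := a)) then 1 else 0) + ?Q * (if ?on (?x(j := a)) then 1 else 0)"
      using card_lift_at[of j a y] by simp
  qed
  also have "\<dots> = t * (\<Sum>j<n. \<Sum>a | a < q \<and> a \<noteq> ?x j. if ?off (?x(j := a)) then 1 else 0)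
      + ?Q * (\<Sum>j<n. \<Sum>a | a < q \<and> a \<noteq> ?x j. if ?on (?x(j := a)) then 1 else 0)"
    by (simp add: sum.distrib sum_distrib_left)
  also have "\<dots> = t * card {x' \<in> hamming_verts n q. hamming_adj n ?x x' \<and> ?off x'}
      + ?Q * card {x' \<in> hamming_verts n q. hamming_adj n ?x x' \<and> ?on x'}"
    using sum_hamming_neighbours_indicator[OF proj_in_hamming_verts[of y], where P = ?off]
      sum_hamming_neighbours_indicator[OF proj_in_hamming_verts[of y], where P = ?on] by simp
  finally have "(\<Sum>j<n. \<Sum>a | a < q \<and> a \<noteq> ?x j. card {s. s < q \<and> lift_at y j a s = 1})
      = t * card {x' \<in> hamming_verts n q. hamming_adj n ?x x' \<and> ?off x'}
      + ?Q * card {x' \<in> hamming_verts n q. hamming_adj n ?x x' \<and> ?on x'}" .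
  moreover have "(\<Sum>l<m. card {v. v < q \<and> v \<noteq> y (q * n + l) \<and> lift (y(q * n + l := v)) = 1})
      = m * (if f ?x = 1 then t - (if lift y = 1 then 1 else 0) else 0)"
    using card_lift_extra[OF y] by simp
  ultimately show ?thesis
    using card_lift_neighbours_split[OF y] by simp
qed

lemma card_off_face_neighbours_add_gap:
  assumes x: "x \<in> hamming_verts n q" "f x = 1"
  shows "card {x' \<in> hamming_verts n q. hamming_adj n x x' \<and> f x' = 1 \<and> x' \<notin> face_of x} + m = c"
proof -
  let ?n1 = "card {x' \<in> hamming_verts n q. hamming_adj n x x' \<and> f x' = 1}"
  let ?n2 = "card {x' \<in> hamming_verts n q. hamming_adj n x x' \<and> f x' = 2}"
  let ?on = "card {x' \<in> hamming_verts n q. hamming_adj n x x' \<and> f x' = 1 \<and> x' \<in> face_of x}"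
  let ?off = "card {x' \<in> hamming_verts n q. hamming_adj n x x' \<and> f x' = 1 \<and> x' \<notin> face_of x}"
  have "?n1 + ?n2 = n * (q - 1)"
    using card_neighbours_two_colours[OF x(1)] colour_cases by blast
  moreover have "?n2 = b"
    using coloring x unfolding is_coloring_def by blast
  moreover have "?on + ?off = ?n1"
    by (subst card_Un_disjoint[symmetric])
      (auto simp: finite_hamming_verts intro: arg_cong[where f = card])
  moreover have "?on = k * (q - 1)"
    by (rule card_neighbours_in_face_colour_1[OF x])
  ultimately have "?off + k * (q - 1) + b = n * (q - 1)"
    by linarith
  then have "int (?off + k * (q - 1) + b) = int (n * (q - 1))"
    by (rule arg_cong)
  moreover have q1: "int (q - 1) = int q - 1"
    using q_ge_2 by simp
  ultimately have "int ?off + int k * (int q - 1) + int b = int n * (int q - 1)"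
    by (simp only: of_nat_add of_nat_mult q1)
  moreover have "int m = int k * (int q - 1) - (int n * (int q - 1) - (int b + int c))"
    using gap by (simp only: main_eigenvalue_def)
  ultimately have "int (?off + m) = int c"
    by simp
  then show ?thesis
    by (rule of_nat_eq_iff[THEN iffD1])
qed

lemma card_lift_neighbours_colour_2:
  assumes y: "y \<in> hamming_verts N q" and "lift y = 2"
  shows "card {y' \<in> hamming_verts N q. hamming_adj N y y' \<and> lift y' = 1} = t * c"
proof (cases "f (proj y) = 1")
  case True
  let ?off = "card {x' \<in> hamming_verts n q. hamming_adj n (proj y) x' \<and>
    f x' = 1 \<and> x' \<notin> face_of (proj y)}"
  have "card {y' \<in> hamming_verts N q. hamming_adj N y y' \<and> lift y' = 1} = t * ?off + m * t"
    using card_lift_neighbours[OF y] True assms(2) by simp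
  also have "\<dots> = t * (?off + m)"
    by (simp add: algebra_simps)
  finally show ?thesis
    using card_off_face_neighbours_add_gap[OF proj_in_hamming_verts True] by simp
next
  case False
  then have "f (proj y) = 2"
    using colour_cases[OF proj_in_hamming_verts] by blast
  then have "card {x' \<in> hamming_verts n q. hamming_adj n (proj y) x' \<and> f x' = 1} = c"
    using coloring proj_in_hamming_verts unfolding is_coloring_def by blast
  then show ?thesis
    using card_lift_neighbours[OF y] False by simp
qed

lemma card_lift_neighbours_colour_1:
  assumes y: "y \<in> hamming_verts N q" and g1: "lift y = 1"
  shows "card {y' \<in> hamming_verts N q. hamming_adj N y y' \<and> lift y' = 2} = q * (b + c) - t * c"
proof -
  let ?x = "proj y"
  let ?n1 = "card {y' \<in> hamming_verts N q. hamming_adj N y y' \<and> lift y' = 1}"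
  let ?n2 = "card {y' \<in> hamming_verts N q. hamming_adj N y y' \<and> lift y' = 2}"
  let ?off = "card {x' \<in> hamming_verts n q. hamming_adj n ?x x' \<and> f x' = 1 \<and> x' \<notin> face_of ?x}"
  have f1: "f ?x = 1"
    using lift_eq_1_proj[OF g1] .
  have "?n1 = t * ?off + q * (k * (q - 1)) + m * (t - 1)"
    using card_lift_neighbours[OF y] f1 g1
      card_neighbours_in_face_colour_1[OF proj_in_hamming_verts f1]
    by simp
  moreover have q1: "int (q - 1) = int q - 1" and "int (t - 1) = int t - 1"
    using q_ge_2 t_pos by simp_all
  ultimately have n1:
      "int ?n1 = int t * int ?off + int q * (int k * (int q - 1)) + int m * (int t - 1)"
    by (simp only: of_nat_add of_nat_mult)
  have "?n1 + ?n2 = N * (q - 1)"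
    by (rule card_neighbours_two_colours[OF y]) (use lift_cases in blast)
  then have "int (?n1 + ?n2) = int (N * (q - 1))"
    by (rule arg_cong)
  then have "int ?n1 + int ?n2 = (int q * int n + int m) * (int q - 1)"
    by (simp only: of_nat_add of_nat_mult N_def q1)
  moreover have "int ?off + int m = int c"
    using card_off_face_neighbours_add_gap[OF proj_in_hamming_verts f1] by linarith
  moreover have "int m = int k * (int q - 1) - (int n * (int q - 1) - (int b + int c))"
    using gap by (simp only: main_eigenvalue_def)
  ultimately have "int ?n2 = int q * (int b + int c) - int t * int c"
    using n1 by algebra
  moreover have "t * c \<le> q * (b + c)"
    using t_le by (intro mult_mono) simp_all
  then have "int (q * (b + c) - t * c) = int q * (int b + int c) - int t * int c"
    by (simp add: of_nat_diff)
  ultimately show ?thesis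
    by (metis of_nat_eq_iff)
qed

lemma proj_surj:
  assumes x: "x \<in> hamming_verts n q"
  obtains y where "y \<in> hamming_verts N q" "proj y = x" "tail_sum y = 0"
proof -
  have "\<exists>w\<in>hamming_verts q q. syndrome w = x j \<and> code_tail w = 0" if "j < n" for j
    using syndrome_code_tail_surj hamming_verts_less[OF x that] q_ge_2 by simp
  then have "\<forall>j. \<exists>w. j < n \<longrightarrow> w \<in> hamming_verts q q \<and> syndrome w = x j \<and> code_tail w = 0"
    by blast
  then obtain W where W: "\<And>j. j < n \<Longrightarrow>
      W j \<in> hamming_verts q q \<and> syndrome (W j) = x j \<and> code_tail (W j) = 0"
    by metis
  define y where "y = (\<lambda>p. if p < q * n then W (p div q) (p mod q) else 0)"
  have div_less: "p div q < n" if "p < q * n" for p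
    using that q_ge_2 by (simp add: div_less_iff_less_mult mult.commute)
  have yV: "y \<in> hamming_verts N q"
    using W div_less q_ge_2 by (auto simp: y_def N_def hamming_verts_def)
  have block: "block j y = W j" if "j < n" for j
  proof
    fix i show "block j y i = W j i"
    proof (cases "i < q")
      case True
      then show ?thesis
        using block_index_less[OF that True] by (simp add: block_def y_def)
    next
      case False
      then show ?thesis
        using W[OF that] by (simp add: block_def hamming_verts_def)
    qed
  qed
  have "proj y = x"
  proof
    fix j show "proj y j = x j"
      using block W x by (cases "j < n") (simp_all add: proj_def hamming_verts_def)
  qed
  moreover have "tail_sum y = 0"
    using block W by (simp add: tail_sum_def extra_sum_def y_def)
  ultimately show thesis
    using that yV by blast
qed

lemma lift_image: "lift ` hamming_verts N q = {1, 2}"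
proof -
  have "f ` hamming_verts n q = {1, 2}"
    using coloring by (simp add: is_coloring_def)
  then obtain x1 x2 where x1: "x1 \<in> hamming_verts n q" "f x1 = 1"
    and x2: "x2 \<in> hamming_verts n q" "f x2 = 2"
    by (metis imageE insertI1 insertI2 singletonI)
  obtain y1 where "y1 \<in> hamming_verts N q" "proj y1 = x1" "tail_sum y1 = 0"
    using proj_surj[OF x1(1)] .
  moreover obtain y2 where "y2 \<in> hamming_verts N q" "proj y2 = x2"
    using proj_surj[OF x2(1)] .
  ultimately have "1 \<in> lift ` hamming_verts N q" "2 \<in> lift ` hamming_verts N q"
    using x1 x2 t_pos q_ge_2 by (force simp: lift_def)+
  moreover have "lift ` hamming_verts N q \<subseteq> {1, 2}"
    using lift_cases by blast
  ultimately show ?thesis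
    by blast
qed

lemma lift_coloring: "is_coloring N q (q * (b + c) - t * c) (t * c) lift"
proof -
  have "\<forall>y\<in>hamming_verts N q. lift y = 1 \<longrightarrow>
      card {y' \<in> hamming_verts N q. hamming_adj N y y' \<and> lift y' = 2} = q * (b + c) - t * c"
    using card_lift_neighbours_colour_1 by blast
  moreover have "\<forall>y\<in>hamming_verts N q. lift y = 2 \<longrightarrow>
      card {y' \<in> hamming_verts N q. hamming_adj N y y' \<and> lift y' = 1} = t * c"
    using card_lift_neighbours_colour_2 by blast
  ultimately show ?thesis
    unfolding is_coloring_def using lift_image by blast
qed

lemma main_eigenvalue_lift:
  "main_eigenvalue N q (q * (b + c) - t * c) (t * c) = int (q * k) * (int q - 1) - int m"
proof -
  have "t * c \<le> q * (b + c)"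
    using t_le by (intro mult_mono) simp_all
  then have "int (q * (b + c) - t * c) + int (t * c) = int q * (int b + int c)"
    by (simp add: of_nat_diff)
  moreover have "int m = int k * (int q - 1) - (int n * (int q - 1) - (int b + int c))"
    using gap by (simp only: main_eigenvalue_def)
  ultimately show ?thesis
    unfolding main_eigenvalue_def N_def of_nat_add of_nat_mult by algebra
qed

definition lifted_coords :: "(nat \<Rightarrow> nat) \<Rightarrow> nat set" where
  "lifted_coords y = (\<lambda>(j, i). j * q + i) ` (free_coords (proj y) \<times> {..<q})"

definition lifted_face :: "(nat \<Rightarrow> nat) \<Rightarrow> (nat \<Rightarrow> nat) set" where
  "lifted_face y = {y' \<in> hamming_verts N q. \<forall>p\<in>{..<N} - lifted_coords y. y' p = y p}"

lemma lifted_coords: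
  assumes "lift y = 1"
  shows "lifted_coords y \<subseteq> {..<N}" "card (lifted_coords y) = q * k"
proof -
  have K: "free_coords (proj y) \<subseteq> {..<n}" "card (free_coords (proj y)) = k"
    using face_of_eq[OF proj_in_hamming_verts lift_eq_1_proj[OF assms]] by auto
  show "lifted_coords y \<subseteq> {..<N}"
  proof
    fix p assume "p \<in> lifted_coords y"
    then obtain j i where "j \<in> free_coords (proj y)" "i < q" "p = j * q + i"
      by (auto simp: lifted_coords_def)
    with K(1) show "p \<in> {..<N}"
      using block_index_less[of j n i q] by (auto simp: N_def)
  qed
  have "inj_on (\<lambda>(j, i). j * q + i) (free_coords (proj y) \<times> {..<q})"
    by (rule inj_onI) (auto dest: block_index_inj)
  then have "card (lifted_coords y) = card (free_coords (proj y) \<times> {..<q})"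
    unfolding lifted_coords_def by (rule card_image)
  with K(2) show "card (lifted_coords y) = q * k"
    by (simp add: card_cartesian_product)
qed

lemma lifted_face_agree:
  assumes y: "lift y = 1" and y': "y' \<in> lifted_face y"
  shows "\<And>j. j < n \<Longrightarrow> j \<notin> free_coords (proj y) \<Longrightarrow> block j y' = block j y"
    and "extra_sum y' = extra_sum y"
proof -
  have agree: "y' p = y p" if "p < N" "p \<notin> lifted_coords y" for p
    using y' that by (auto simp: lifted_face_def)
  show "block j y' = block j y" if j: "j < n" "j \<notin> free_coords (proj y)" for j
  proof
    fix i show "block j y' i = block j y i"
    proof (cases "i < q")
      case True
      have "j * q + i \<notin> lifted_coords y"
        using j True by (auto simp: lifted_coords_def dest: block_index_inj)
      moreover have "j * q + i < N"
        using block_index_less[OF j(1) True] by (simp add: N_def)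
      ultimately show ?thesis
        using agree True by (simp add: block_def)
    qed (simp add: block_def)
  qed
  have "y' (q * n + l) = y (q * n + l)" if "l < m" for l
  proof (rule agree)
    show "q * n + l < N" using that by (simp add: N_def)
    show "q * n + l \<notin> lifted_coords y"
    proof
      assume "q * n + l \<in> lifted_coords y"
      then obtain j i where ji: "j \<in> free_coords (proj y)" "i < q" "q * n + l = j * q + i"
        by (auto simp: lifted_coords_def)
      then have "j < n"
        using face_of_eq(2)[OF proj_in_hamming_verts lift_eq_1_proj[OF y]] by auto
      with ji show False
        using block_index_less[of j n i q] by linarith
    qed
  qed
  then show "extra_sum y' = extra_sum y"
    by (simp add: extra_sum_def)
qed

lemma lifted_face_mem:
  assumes y: "y \<in> hamming_verts N q" "lift y = 1" and y': "y' \<in> lifted_face y"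
  shows "lift y' = 1" "lifted_face y' = lifted_face y"
proof -
  let ?x = "proj y"
  have f1: "f ?x = 1"
    using lift_eq_1_proj[OF y(2)] .
  have blocks: "\<And>j. j < n \<Longrightarrow> j \<notin> free_coords ?x \<Longrightarrow> block j y' = block j y"
    using lifted_face_agree(1)[OF y(2) y'] .
  have "\<forall>j\<in>{..<n} - free_coords ?x. proj y' j = ?x j"
    using blocks by (simp add: proj_def)
  then have "proj y' \<in> face_of ?x"
    using face_of_eq(1)[OF proj_in_hamming_verts f1] proj_in_hamming_verts by blast
  then have f1': "f (proj y') = 1" and free: "free_coords (proj y') = free_coords ?x"
    using mem_face_of[OF proj_in_hamming_verts f1] by auto
  have "tail_sum y' = tail_sum y"
    unfolding tail_sum_def free lifted_face_agree(2)[OF y(2) y'] using blocks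
    by (intro arg_cong2[where f = "(+)"] sum.cong refl) auto
  then show "lift y' = 1"
    using y(2) f1 f1' by (simp add: lift_def)
  have "lifted_coords y' = lifted_coords y"
    by (simp add: lifted_coords_def free)
  then show "lifted_face y' = lifted_face y"
    using y' by (auto simp: lifted_face_def)
qed

lemma lift_face_partition:
  defines "P' \<equiv> lifted_face ` {y \<in> hamming_verts N q. lift y = 1}"
  shows "\<forall>F\<in>P'. is_face N q (q * k) F"
    and "\<forall>F\<in>P'. \<forall>G\<in>P'. F \<noteq> G \<longrightarrow> F \<inter> G = {}"
    and "\<Union>P' = {y \<in> hamming_verts N q. lift y = 1}"
proof -
  show "\<forall>F\<in>P'. is_face N q (q * k) F"
  proof
    fix F assume "F \<in> P'"
    then obtain y where y: "y \<in> hamming_verts N q" "lift y = 1" "F = lifted_face y"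
      by (auto simp: P'_def)
    show "is_face N q (q * k) F"
      unfolding is_face_def
    proof (intro exI conjI)
      show "lifted_coords y \<subseteq> {..<N}" "card (lifted_coords y) = q * k"
        using lifted_coords[OF y(2)] by auto
      show "\<forall>i\<in>{..<N} - lifted_coords y. y i < q"
        using y(1) by (auto simp: hamming_verts_less)
      show "F = {x \<in> hamming_verts N q. \<forall>i\<in>{..<N} - lifted_coords y. x i = y i}"
        using y(3) by (simp add: lifted_face_def)
    qed
  qed
  show "\<forall>F\<in>P'. \<forall>G\<in>P'. F \<noteq> G \<longrightarrow> F \<inter> G = {}"
    unfolding P'_def using lifted_face_mem(2) by blast
  show "\<Union>P' = {y \<in> hamming_verts N q. lift y = 1}"
    unfolding P'_def using lifted_face_mem(1) by (auto simp: lifted_face_def)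
qed

end

section \<open>Iteration\<close>

definition face_partition :: "nat \<Rightarrow> nat \<Rightarrow> nat \<Rightarrow> (nat \<Rightarrow> nat) set \<Rightarrow> bool" where
  "face_partition n q k S \<longleftrightarrow>
     (\<exists>P. (\<forall>F\<in>P. is_face n q k F) \<and> (\<forall>F\<in>P. \<forall>G\<in>P. F \<noteq> G \<longrightarrow> F \<inter> G = {}) \<and> \<Union>P = S)"

definition face_coloring :: "nat \<Rightarrow> nat \<Rightarrow> nat \<Rightarrow> nat \<Rightarrow> nat \<Rightarrow> nat \<Rightarrow> ((nat \<Rightarrow> nat) \<Rightarrow> nat) \<Rightarrow> bool" where
  "face_coloring n q b c k m f \<longleftrightarrow> is_coloring n q b c f \<and>
     face_partition n q k {x \<in> hamming_verts n q. f x = 1} \<and>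
     int m = int k * (int q - 1) - main_eigenvalue n q b c"

lemma face_coloring_step:
  assumes code: "perfect_code_1 (q + 1) q C" and q: "2 \<le> q"
    and f: "face_coloring n q b c k m f" and t: "1 \<le> t" "t \<le> q"
  shows "\<exists>g. face_coloring (q * n + m) q (q * (b + c) - t * c) (t * c) (q * k) m g"
proof -
  obtain P where P: "\<forall>F\<in>P. is_face n q k F" "\<forall>F\<in>P. \<forall>G\<in>P. F \<noteq> G \<longrightarrow> F \<inter> G = {}"
      "\<Union>P = {x \<in> hamming_verts n q. f x = 1}"
    using f by (auto simp: face_coloring_def face_partition_def)
  interpret lifting C q n b c k f P m t
    using code q f P t by unfold_locales (auto simp: face_coloring_def)
  have "face_partition N q (q * k) {y \<in> hamming_verts N q. lift y = 1}"
    unfolding face_partition_def using lift_face_partition by blast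
  then have "face_coloring N q (q * (b + c) - t * c) (t * c) (q * k) m lift"
    unfolding face_coloring_def using lift_coloring main_eigenvalue_lift by simp
  then show ?thesis
    unfolding N_def by blast
qed

lemma face_coloring_iterate:
  assumes code: "perfect_code_1 (q + 1) q C" and q: "2 \<le> q" and f: "face_coloring n q b c k m f"
    and t: "\<forall>i\<in>{1..r}. 1 \<le> t i \<and> t i \<le> q"
  shows "\<exists>g. face_coloring (q ^ r * n + m * (\<Sum>i<r. q ^ i)) q (q ^ r * (b + c) - (\<Prod>i=1..r. t i) * c)
          ((\<Prod>i=1..r. t i) * c) (q ^ r * k) m g"
  using t
proof (induction r)
  case 0
  show ?case using f by auto
next
  case (Suc r)
  let ?T = "\<Prod>i=1..r. t i"
  obtain g where g: "face_coloring (q ^ r * n + m * (\<Sum>i<r. q ^ i)) q (q ^ r * (b + c) - ?T * c)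
      (?T * c) (q ^ r * k) m g"
    using Suc by auto
  have ts: "1 \<le> t (Suc r)" "t (Suc r) \<le> q"
    using Suc.prems by auto
  have "?T \<le> q ^ r"
    using prod_mono[of "{1..r}" t "\<lambda>_. q"] Suc.prems by auto
  then have "?T * c \<le> q ^ r * (b + c)"
    by (intro mult_mono) simp_all
  then have bc: "(q ^ r * (b + c) - ?T * c) + ?T * c = q ^ r * (b + c)"
    by simp
  have "(\<Sum>i<Suc r. q ^ i) = 1 + q * (\<Sum>i<r. q ^ i)"
    by (simp only: sum.lessThan_Suc_shift power_0 power_Suc sum_distrib_left)
  then have N: "q * (q ^ r * n + m * (\<Sum>i<r. q ^ i)) + m = q ^ Suc r * n + m * (\<Sum>i<Suc r. q ^ i)"
    by (simp add: algebra_simps)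
  have T: "t (Suc r) * (?T * c) = (\<Prod>i=1..Suc r. t i) * c"
    by (simp add: prod.nat_ivl_Suc')
  have bc': "q * (q ^ r * (b + c)) = q ^ Suc r * (b + c)" and k: "q * (q ^ r * k) = q ^ Suc r * k"
    by simp_all
  show ?case
    using face_coloring_step[OF code q g ts] unfolding bc bc' N T k .
qed

lemma int_geometric_sum_div: "2 \<le> q \<Longrightarrow> (int q ^ r - 1) div (int q - 1) = int (\<Sum>i<r. q ^ i)"
  by (simp add: power_diff_1_eq)

theorem corollary1:
  fixes n q b c k :: nat and f :: "(nat \<Rightarrow> nat) \<Rightarrow> nat" and lam :: int
  assumes code: "\<exists>C. perfect_code_1 (q + 1) q C"
    and col: "is_coloring n q b c f"
    and lamdef: "lam = main_eigenvalue n q b c"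
    and part: "\<exists>P. (\<forall>F\<in>P. is_face n q k F) \<and> (\<forall>F\<in>P. \<forall>G\<in>P. F \<noteq> G \<longrightarrow> F \<inter> G = {}) \<and>
                  \<Union>P = {x \<in> hamming_verts n q. f x = 1}"
    and le: "lam \<le> int k * (int q - 1)"
  shows "\<forall>r::nat. r > 0 \<longrightarrow> (\<forall>t :: nat \<Rightarrow> nat. (\<forall>i\<in>{1..r}. 1 \<le> t i \<and> t i \<le> q) \<longrightarrow>
     (let T = (\<Prod>i=1..r. t i);
          N = nat (int (q ^ r * n) + (int k * (int q - 1) - lam) * ((int q ^ r - 1) div (int q - 1)));
          b' = q ^ r * (b + c) - T * c;
          c' = T * c
      in (\<exists>g. is_coloring N q b' c' g) \<and>
         main_eigenvalue N q b' c' = lam + int k * (int q - 1) * (int q ^ r - 1)))"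
proof (intro allI impI)
  fix r :: nat and t :: "nat \<Rightarrow> nat"
  assume t: "\<forall>i\<in>{1..r}. 1 \<le> t i \<and> t i \<le> q"
  obtain C where C: "perfect_code_1 (q + 1) q C"
    using code by blast
  have q: "2 \<le> q"
    using col by (rule is_coloring_q_ge_2)
  define m where "m = nat (int k * (int q - 1) - lam)"
  have m: "int k * (int q - 1) - lam = int m" and lam: "lam = int k * (int q - 1) - int m"
    using le by (simp_all add: m_def)
  have "face_coloring n q b c k m f"
    using col part m lamdef by (simp add: face_coloring_def face_partition_def)
  then obtain g where g: "face_coloring (q ^ r * n + m * (\<Sum>i<r. q ^ i)) q
      (q ^ r * (b + c) - (\<Prod>i=1..r. t i) * c) ((\<Prod>i=1..r. t i) * c) (q ^ r * k) m g"
    using face_coloring_iterate[OF C q _ t] by blast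
  have N: "nat (int (q ^ r * n) + int m * ((int q ^ r - 1) div (int q - 1)))
      = q ^ r * n + m * (\<Sum>i<r. q ^ i)"
    unfolding int_geometric_sum_div[OF q]
    by (simp only: of_nat_mult[symmetric] of_nat_add[symmetric] nat_int)
  show "let T = (\<Prod>i=1..r. t i);
          N = nat (int (q ^ r * n) + (int k * (int q - 1) - lam) * ((int q ^ r - 1) div (int q - 1)));
          b' = q ^ r * (b + c) - T * c;
          c' = T * c
      in (\<exists>g. is_coloring N q b' c' g) \<and>
         main_eigenvalue N q b' c' = lam + int k * (int q - 1) * (int q ^ r - 1)"
    using g lam unfolding Let_def m N face_coloring_def by (auto simp: algebra_simps)
qed

end
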